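(* Let $W_{el}:\mathbb R^{3\times3}\to[0,\infty]$ satisfy: there are a quadratic form $Q_{el}$ on $\mathbb R^{3\times3}$ and an increasing $r_{el}:[0,\infty)\to[0,\infty]$ with $\lim_{\delta\to0}r_{el}(\delta)=0$ and $|W_{el}(I+G)-Q_{el}(G)|\le|G|^2r_{el}(|G|)$ for all $G$. Let $\Omega\subset\mathbb R^3$ be bounded and measurable, let $(\Phi^h),(\Psi^h)\subset L^2(\Omega,\mathbb R^{3\times3})$ be bounded sequences, and let $\kappa:(0,\infty)\to(0,\infty)$ with $\kappa(h)\to0$ as $h\to0$. Then there exist measurable $O^h\subset\Omega$ with $|\Omega\setminus O^h|\to0$ and $\kappa(h)h^{-2}|\Omega\setminus O^h|\to0$, such that $\det(I+h\Psi^h(x))>0$ for all $x\in O^h$ and $$\lim_{h\to0}\Big|h^{-2}\int_{O^h}W_{el}\big((I+h\Phi^h)(I+h\Psi^h)^{-1}\big)-\int_{O^h}Q_{el}(\Phi^h-\Psi^h)\Big|=0.$$ *)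

theory Defs
  imports "HOL-Analysis.Analysis"
begin

definition quadratic_form :: "('a::real_vector \<Rightarrow> real) \<Rightarrow> bool" where
  "quadratic_form Q \<longleftrightarrow> (\<exists>B. bilinear B \<and> (\<forall>G. Q G = B G G))"

end

theory Submission imports Defs begin

text \<open>Truncate where the strains are small. On
  \<open>T\<^sub>h = {h\<^sup>2 (|\<Phi>\<^sub>h|\<^sup>2 + |\<Psi>\<^sub>h|\<^sup>2) < d\<^sub>h}\<close> one has
  \<open>(I + h\<Phi>)(I + h\<Psi>)\<^sup>-\<^sup>1 = I + G\<close> with \<open>G = h(\<Phi> - \<Psi>)(I + h\<Psi>)\<^sup>-\<^sup>1\<close>, so \<open>|G| \<le> 3 sqrt d\<^sub>h\<close>,
  \<open>|W(I + G) - Q(G)| \<le> |G|\<^sup>2 r(|G|)\<close> and \<open>Q(G) = h\<^sup>2 Q(\<Phi> - \<Psi>) + O(h\<^sup>3 |\<Phi> - \<Psi>|\<^sup>2 |\<Psi>|)\<close>.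
  Integrating over \<open>T\<^sub>h\<close> and dividing by \<open>h\<^sup>2\<close> leaves an error of order
  \<open>r(3 sqrt d\<^sub>h) + sqrt d\<^sub>h\<close> times the \<open>L\<^sup>2\<close> bounds, while Markov's inequality gives
  \<open>|\<Omega> - T\<^sub>h| \<le> C h\<^sup>2 / d\<^sub>h\<close>. A threshold \<open>d\<^sub>h \<rightarrow> 0\<close> that is large compared with both \<open>h\<^sup>2\<close>
  and \<open>\<kappa>(h)\<close>, such as \<open>min (1/4) (sqrt \<kappa>(h) + h)\<close>, therefore makes all three quantities vanish.\<close>

lemma norm_matrix_vector_mult_le:
  fixes X :: "real^'n^'m"
  shows "norm (X *v v) \<le> norm X * norm v"
proof -
  have "norm (X *v v)^2 = (\<Sum>i\<in>UNIV. (inner (X$i) v)^2)"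
    by (simp add: norm_vec_def L2_set_def sum_nonneg matrix_vector_mul_component)
  also have "\<dots> \<le> (\<Sum>i\<in>UNIV. (norm (X$i) * norm v)^2)"
    by (intro sum_mono) (metis Cauchy_Schwarz_ineq2 abs_ge_zero power_mono power2_abs)
  also have "\<dots> = (norm X * norm v)^2"
    by (simp add: norm_vec_def L2_set_def sum_nonneg power_mult_distrib sum_distrib_right)
  finally show ?thesis
    by (meson norm_ge_zero power2_le_imp_le zero_le_mult_iff)
qed

lemma norm_transpose: "norm (transpose (X::real^'n^'m)) = norm X"
proof -
  have "norm (transpose X)^2 = (\<Sum>i\<in>UNIV. \<Sum>j\<in>UNIV. (X$j$i)^2)"
    by (simp add: norm_vec_def L2_set_def sum_nonneg transpose_def)
  also have "\<dots> = (\<Sum>j\<in>UNIV. \<Sum>i\<in>UNIV. (X$j$i)^2)"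
    by (rule sum.swap)
  also have "\<dots> = norm X^2"
    by (simp add: norm_vec_def L2_set_def sum_nonneg)
  finally show ?thesis
    by (simp add: power2_eq_iff_nonneg)
qed

lemma matrix_mult_row: "((X::real^'n^'m) ** Y) $ i = transpose Y *v (X $ i)"
  by (simp add: vec_eq_iff matrix_matrix_mult_def matrix_vector_mult_def transpose_def mult.commute)

lemma norm_matrix_mult_le:
  fixes X :: "real^'n^'m" and Y :: "real^'p^'n"
  shows "norm (X ** Y) \<le> norm X * norm Y"
proof -
  have "norm (X ** Y)^2 = (\<Sum>i\<in>UNIV. norm ((X ** Y)$i)^2)"
    by (simp add: norm_vec_def L2_set_def sum_nonneg)
  also have "\<dots> \<le> (\<Sum>i\<in>UNIV. (norm (X$i) * norm Y)^2)"
  proof (intro sum_mono power_mono)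
    fix i
    show "norm ((X ** Y)$i) \<le> norm (X$i) * norm Y"
      using norm_matrix_vector_mult_le[of "transpose Y" "X$i"]
      by (simp only: matrix_mult_row norm_transpose mult.commute)
  qed simp
  also have "\<dots> = (norm X * norm Y)^2"
    by (simp add: norm_vec_def L2_set_def sum_nonneg power_mult_distrib sum_distrib_right)
  finally show ?thesis
    by (meson norm_ge_zero power2_le_imp_le zero_le_mult_iff)
qed

lemma matrix_add_rdistrib: "((A::real^'n^'m) + B) ** C = A ** C + B ** C"
  by (simp add: matrix_matrix_mult_def vec_eq_iff algebra_simps sum.distrib)

lemma matrix_diff_rdistrib: "((A::real^'n^'m) - B) ** C = A ** C - B ** C"
  by (simp add: matrix_matrix_mult_def vec_eq_iff algebra_simps sum_subtractf)

lemma matrix_diff_ldistrib: "(C::real^'n^'m) ** (A - B) = C ** A - C ** B"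
  by (simp add: matrix_matrix_mult_def vec_eq_iff algebra_simps sum_subtractf)

lemma matrix_inv_right:
  assumes "invertible (A::real^'n^'n)"
  shows "A ** matrix_inv A = mat 1"
  using someI_ex[OF assms[unfolded invertible_def]] by (simp add: matrix_inv_def)

lemma invertible_mat_1_add:
  assumes "norm (B::real^'n^'n) < 1"
  shows "invertible (mat 1 + B)"
proof -
  have "x = 0" if "(mat 1 + B) *v x = 0" for x
  proof -
    have "norm x = norm (B *v x)"
      using that by (simp add: matrix_vector_mult_add_rdistrib add_eq_0_iff)
    also have "\<dots> \<le> norm B * norm x"
      by (rule norm_matrix_vector_mult_le)
    finally have "(1 - norm B) * norm x \<le> 0"
      by (simp add: algebra_simps)
    with assms show "x = 0"
      by (simp add: mult_le_0_iff)
  qed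
  then show ?thesis
    by (metis invertible_left_inverse matrix_left_invertible_ker)
qed

text \<open>The determinant cannot vanish along the segment from the identity to \<open>mat 1 + B\<close>,
  so it keeps the sign it has at the identity.\<close>
lemma det_mat_1_add_pos:
  assumes "norm (B::real^'n^'n) < 1"
  shows "det (mat 1 + B) > 0"
proof (rule ccontr)
  assume "\<not> ?thesis"
  moreover have "continuous_on {0..1} (\<lambda>t::real. det (mat 1 + t *\<^sub>R B))"
    unfolding det_def by (intro continuous_intros)
  ultimately obtain t where t: "0 \<le> t" "t \<le> 1" "det (mat 1 + t *\<^sub>R B) = 0"
    using IVT2'[of "\<lambda>t. det (mat 1 + t *\<^sub>R B)" 1 0 0] by auto
  have "norm (t *\<^sub>R B) \<le> norm B"
    using t by (simp add: mult_left_le_one_le)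
  with assms have "invertible (mat 1 + t *\<^sub>R B)"
    by (intro invertible_mat_1_add) simp
  with t(3) show False
    by (simp add: invertible_det_nz)
qed

lemma norm_mult_matrix_inv_mat_1_add_diff:
  fixes B X :: "real^'n^'n"
  assumes "norm B \<le> 1/2"
  shows "norm (X ** matrix_inv (mat 1 + B) - X) \<le> 2 * norm X * norm B"
proof -
  define M where "M = matrix_inv (mat 1 + B)"
  have "(mat 1 + B) ** M = mat 1"
    unfolding M_def using assms by (intro matrix_inv_right invertible_mat_1_add) simp
  then have M: "M = mat 1 - B ** M"
    by (simp add: matrix_add_rdistrib algebra_simps)
  have "B ** M = B - B ** (B ** M)"
    using arg_cong[OF M, of "(**) B"] by (simp add: matrix_diff_ldistrib)
  then have "norm (B ** M) \<le> norm B + norm (B ** (B ** M))"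
    by (metis norm_triangle_ineq4)
  also have "\<dots> \<le> norm B + norm B * norm (B ** M)"
    by (simp add: norm_matrix_mult_le)
  finally have "norm (B ** M) \<le> norm B + norm B * norm (B ** M)" .
  then have "(1 - norm B) * norm (B ** M) \<le> norm B"
    by (simp add: algebra_simps)
  moreover have "1/2 * norm (B ** M) \<le> (1 - norm B) * norm (B ** M)"
    using assms by (intro mult_right_mono) auto
  ultimately have BM: "norm (B ** M) \<le> 2 * norm B"
    by linarith
  have "X ** M - X = - (X ** (B ** M))"
    using arg_cong[OF M, of "(**) X"] by (simp add: matrix_diff_ldistrib)
  then have "norm (X ** M - X) \<le> norm X * norm (B ** M)"
    by (simp add: norm_matrix_mult_le)
  also have "\<dots> \<le> 2 * norm X * norm B"
    using mult_left_mono[OF BM norm_ge_zero[of X]] by simp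
  finally show ?thesis
    by (simp add: M_def)
qed

lemma mat_1_add_mult_matrix_inv:
  fixes A B :: "real^'n^'n"
  assumes "invertible (mat 1 + B)"
  shows "(mat 1 + A) ** matrix_inv (mat 1 + B) = mat 1 + (A - B) ** matrix_inv (mat 1 + B)"
proof -
  define M where "M = matrix_inv (mat 1 + B)"
  have "(mat 1 + B) ** M = mat 1"
    unfolding M_def using assms by (rule matrix_inv_right)
  then have inv: "M + B ** M = mat 1"
    by (simp add: matrix_add_rdistrib)
  have "(mat 1 + A) ** M = (M + B ** M) + (A - B) ** M"
    by (simp add: matrix_add_rdistrib matrix_diff_rdistrib)
  also have "\<dots> = mat 1 + (A - B) ** M"
    by (simp only: inv)
  finally show ?thesis
    by (simp only: M_def)
qed

lemma norm_diff_sq_le: "(norm (x - y))^2 \<le> 2 * ((norm x)^2 + (norm (y::'a::real_normed_vector))^2)"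
proof -
  have "(norm (x - y))^2 \<le> (norm x + norm y)^2"
    by (intro power_mono norm_triangle_ineq4) simp
  also have "\<dots> = 2 * ((norm x)^2 + (norm y)^2) - (norm x - norm y)^2"
    by (simp add: power2_eq_square algebra_simps)
  finally show ?thesis
    by (smt (verit) zero_le_power2)
qed

lemma bilinear_diag_diff_le:
  fixes Bf :: "'a::real_normed_vector \<Rightarrow> 'a \<Rightarrow> real"
  assumes bil: "bilinear Bf" and bnd: "\<And>u v. \<bar>Bf u v\<bar> \<le> K * norm u * norm v"
  shows "\<bar>Bf y y - Bf x x\<bar> \<le> K * norm (y - x) * (norm x + norm y)"
proof -
  have "Bf y y - Bf x x = Bf (y - x) y + Bf x (y - x)"
    by (simp add: bilinear_lsub[OF bil] bilinear_rsub[OF bil])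
  also have "\<bar>\<dots>\<bar> \<le> K * norm (y - x) * norm y + K * norm x * norm (y - x)"
    using bnd[of "y - x" y] bnd[of x "y - x"] by linarith
  finally show ?thesis
    by (simp add: algebra_simps)
qed

lemma bilinear_diag_mult_matrix_inv_mat_1_add:
  fixes Bf :: "real^'n^'n \<Rightarrow> real^'n^'n \<Rightarrow> real" and B X :: "real^'n^'n"
  assumes bil: "bilinear Bf" and K: "\<And>u v. \<bar>Bf u v\<bar> \<le> K * norm u * norm v" and K_nonneg: "0 \<le> K"
    and B: "norm B \<le> 1/2"
  defines "G \<equiv> X ** matrix_inv (mat 1 + B)"
  shows "norm G \<le> 2 * norm X"
    and "\<bar>Bf G G - Bf X X\<bar> \<le> 6 * K * (norm X)^2 * norm B"
proof -
  have GX: "norm (G - X) \<le> 2 * norm X * norm B"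
    using B by (simp add: G_def norm_mult_matrix_inv_mat_1_add_diff)
  also have "\<dots> \<le> norm X"
    using mult_left_mono[OF B, of "2 * norm X"] by simp
  finally show G_le: "norm G \<le> 2 * norm X"
    using norm_triangle_ineq2[of G X] by linarith
  have "\<bar>Bf G G - Bf X X\<bar> \<le> K * norm (G - X) * (norm X + norm G)"
    by (rule bilinear_diag_diff_le[OF bil K])
  also have "\<dots> \<le> K * (2 * norm X * norm B) * (3 * norm X)"
    using GX G_le K_nonneg by (intro mult_mono mult_left_mono) simp_all
  finally show "\<bar>Bf G G - Bf X X\<bar> \<le> 6 * K * (norm X)^2 * norm B"
    by (simp add: power2_eq_square mult_ac)
qed

text \<open>Write \<open>(I + A)(I + B)\<^sup>-\<^sup>1 = I + G\<close> with \<open>G = (A - B)(I + B)\<^sup>-\<^sup>1\<close>: the energy of \<open>I + G\<close>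
  is \<open>Q(G)\<close> up to \<open>|G|\<^sup>2 r(|G|)\<close>, and \<open>Q(G)\<close> is \<open>Q(A - B)\<close> up to \<open>O(|A - B|\<^sup>2 |B|)\<close>.\<close>
lemma stored_energy_linearisation:
  fixes W :: "real^'n^'n \<Rightarrow> ereal" and r :: "real \<Rightarrow> ereal"
    and Bf :: "real^'n^'n \<Rightarrow> real^'n^'n \<Rightarrow> real" and A B :: "real^'n^'n"
  assumes W_nonneg: "\<And>F. 0 \<le> W F"
    and r_mono: "mono_on {0..} r"
    and W_Q: "\<And>G. \<bar>W (mat 1 + G) - ereal (Bf G G)\<bar> \<le> ereal ((norm G)^2) * r (norm G)"
    and bil: "bilinear Bf" and K: "\<And>u v. \<bar>Bf u v\<bar> \<le> K * norm u * norm v" and K_nonneg: "0 \<le> K"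
    and small: "(norm A)^2 + (norm B)^2 \<le> d" and d: "d \<le> 1/4"
    and \<rho>: "r (3 * sqrt d) \<le> ereal \<rho>" and \<rho>_nonneg: "0 \<le> \<rho>"
  shows "\<bar>W ((mat 1 + A) ** matrix_inv (mat 1 + B)) - ereal (Bf (A - B) (A - B))\<bar>
           \<le> ereal (12 * (\<rho> + K * sqrt d) * ((norm A)^2 + (norm B)^2))"
proof -
  define S where "S = (norm A)^2 + (norm B)^2"
  define X where "X = A - B"
  define G where "G = X ** matrix_inv (mat 1 + B)"
  have d_nonneg: "0 \<le> d"
    using small zero_le_power2[of "norm A"] zero_le_power2[of "norm B"] by linarith
  have B_le: "norm B \<le> sqrt d"
    using small zero_le_power2[of "norm A"] by (intro real_le_rsqrt) linarith
  moreover have "sqrt d \<le> sqrt ((1/2)^2)"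
    using d by (simp add: power_divide)
  ultimately have B_half: "norm B \<le> 1/2"
    by simp
  note G = bilinear_diag_mult_matrix_inv_mat_1_add[OF bil K K_nonneg B_half, of X, folded G_def]
  have F: "(mat 1 + A) ** matrix_inv (mat 1 + B) = mat 1 + G"
    using B_half by (simp add: G_def X_def mat_1_add_mult_matrix_inv invertible_mat_1_add)
  have X_sq: "(norm X)^2 \<le> 2 * S"
    unfolding X_def S_def by (rule norm_diff_sq_le)
  have G_sq: "(norm G)^2 \<le> 8 * S"
    using power_mono[OF G(1) norm_ge_zero, of 2] X_sq by (simp add: power_mult_distrib)
  then have "(norm G)^2 \<le> (3 * sqrt d)^2"
    using small d_nonneg by (simp add: S_def power_mult_distrib)
  then have G_small: "norm G \<le> 3 * sqrt d"
    by (rule power2_le_imp_le) (simp add: d_nonneg)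
  have "ereal ((norm G)^2) * r (norm G) \<le> ereal ((norm G)^2) * ereal \<rho>"
    using order_trans[OF mono_onD[OF r_mono _ _ G_small] \<rho>] d_nonneg
    by (intro ereal_mult_left_mono) simp_all
  then have energy: "\<bar>W (mat 1 + G) - ereal (Bf G G)\<bar> \<le> ereal (8 * S * \<rho>)"
    using W_Q[of G] mult_right_mono[OF G_sq \<rho>_nonneg] by (simp add: order_trans)
  obtain w where w: "W (mat 1 + G) = ereal w"
    using energy W_nonneg[of "mat 1 + G"] by (cases "W (mat 1 + G)") auto
  have "6 * K * (norm X)^2 * norm B \<le> 6 * K * (2 * S) * sqrt d"
    using K_nonneg X_sq B_le by (intro mult_mono mult_left_mono) (simp_all add: S_def)
  with G(2) have quadratic: "\<bar>Bf G G - Bf X X\<bar> \<le> 12 * K * S * sqrt d"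
    by linarith
  have "\<bar>w - Bf X X\<bar> \<le> 8 * S * \<rho> + 12 * K * S * sqrt d"
    using energy quadratic w by simp
  also have "\<dots> \<le> 12 * (\<rho> + K * sqrt d) * S"
    using \<rho>_nonneg by (simp add: S_def algebra_simps)
  finally show ?thesis
    using F w by (simp add: S_def X_def)
qed

lemma set_integrable_norm_sq:
  fixes f :: "'a \<Rightarrow> 'b::real_normed_vector"
  assumes meas: "set_borel_measurable M A f"
    and bound: "(\<integral>\<^sup>+x. ennreal ((norm (f x))^2) * indicator A x \<partial>M) \<le> ennreal C" and C: "0 \<le> C"
  shows "set_integrable M A (\<lambda>x. (norm (f x))^2)" and "(\<integral>x\<in>A. (norm (f x))^2 \<partial>M) \<le> C"
proof -
  have eq: "(\<lambda>x. indicator A x *\<^sub>R (norm (f x))^2) = (\<lambda>x. (norm (indicator A x *\<^sub>R f x))^2)"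
    by (simp add: fun_eq_iff indicator_def)
  have meas': "(\<lambda>x. indicator A x *\<^sub>R (norm (f x))^2) \<in> borel_measurable M"
    using meas unfolding eq set_borel_measurable_def by measurable
  have nn: "(\<integral>\<^sup>+x. ennreal (indicator A x *\<^sub>R (norm (f x))^2) \<partial>M)
      = (\<integral>\<^sup>+x. ennreal ((norm (f x))^2) * indicator A x \<partial>M)"
    by (intro nn_integral_cong) (simp add: indicator_def)
  show int: "set_integrable M A (\<lambda>x. (norm (f x))^2)"
    unfolding set_integrable_def using bound
    by (intro integrableI_bounded meas') (simp add: nn[unfolded real_scaleR_def] le_less_trans)
  have "ennreal (\<integral>x\<in>A. (norm (f x))^2 \<partial>M) = (\<integral>\<^sup>+x. ennreal (indicator A x *\<^sub>R (norm (f x))^2) \<partial>M)"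
    using int unfolding set_lebesgue_integral_def set_integrable_def
    by (intro nn_integral_eq_integral[symmetric]) auto
  also note nn
  also note bound
  finally show "(\<integral>x\<in>A. (norm (f x))^2 \<partial>M) \<le> C"
    using C by (simp add: ennreal_le_iff)
qed

lemma sublevel_set_in_sets:
  fixes u :: "'a \<Rightarrow> real"
  assumes int: "set_integrable M \<Omega> u" and \<Omega>: "\<Omega> \<in> sets M"
  shows "{x\<in>\<Omega>. u x < d} \<in> sets M"
proof -
  have [measurable]: "(\<lambda>x. indicator \<Omega> x * u x) \<in> borel_measurable M"
    using borel_measurable_integrable[OF int[unfolded set_integrable_def]] by simp
  have "{x\<in>\<Omega>. u x < d} = \<Omega> \<inter> {x\<in>space M. indicator \<Omega> x * u x < d}"
    using sets.sets_into_space[OF \<Omega>] by auto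
  also have "\<dots> \<in> sets M"
    using \<Omega> by measurable
  finally show ?thesis .
qed

lemma measure_diff_sublevel_le:
  fixes u :: "'a \<Rightarrow> real"
  assumes int: "set_integrable M \<Omega> u" and \<Omega>: "\<Omega> \<in> sets M"
    and u_nonneg: "\<And>x. x \<in> \<Omega> \<Longrightarrow> 0 \<le> u x" and d: "0 < d"
  shows "measure M (\<Omega> - {x\<in>\<Omega>. u x < d}) \<le> (\<integral>x\<in>\<Omega>. u x \<partial>M) / d"
proof -
  have "\<Omega> - {x\<in>\<Omega>. u x < d} = {x\<in>\<Omega>. d \<le> u x}"
    by auto
  then show ?thesis
    using u_nonneg d by (simp add: integral_Markov_inequality'_measure[OF int \<Omega>])
qed

text \<open>No measurability of \<open>F\<close> is needed: the nonnegative integral is monotone for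
  arbitrary functions.\<close>
lemma nn_integral_between_integrals:
  fixes F :: "'a \<Rightarrow> ennreal" and lo up :: "'a \<Rightarrow> real"
  assumes int_lo: "integrable M lo" and int_up: "integrable M up" and up_nonneg: "\<And>x. 0 \<le> up x"
    and lo_le: "\<And>x. ennreal (lo x) \<le> F x" and up_ge: "\<And>x. F x \<le> ennreal (up x)"
  obtains n where "(\<integral>\<^sup>+x. F x \<partial>M) = ennreal n" and "0 \<le> n"
    and "(\<integral>x. lo x \<partial>M) \<le> n" and "n \<le> (\<integral>x. up x \<partial>M)"
proof -
  have "(\<integral>\<^sup>+x. F x \<partial>M) \<le> (\<integral>\<^sup>+x. ennreal (up x) \<partial>M)"
    by (intro nn_integral_mono up_ge)
  also have "\<dots> = ennreal (\<integral>x. up x \<partial>M)"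
    by (intro nn_integral_eq_integral int_up) (simp add: up_nonneg)
  finally have N_up: "(\<integral>\<^sup>+x. F x \<partial>M) \<le> ennreal (\<integral>x. up x \<partial>M)" .
  have "ennreal (\<integral>x. lo x \<partial>M) \<le> ennreal (\<integral>x. max 0 (lo x) \<partial>M)"
    using int_lo by (intro ennreal_leI integral_mono) auto
  also have "\<dots> = (\<integral>\<^sup>+x. ennreal (max 0 (lo x)) \<partial>M)"
    using int_lo by (intro nn_integral_eq_integral[symmetric]) auto
  also have "\<dots> \<le> (\<integral>\<^sup>+x. F x \<partial>M)"
    by (intro nn_integral_mono) (simp add: ennreal_max_0 lo_le)
  finally have N_lo: "ennreal (\<integral>x. lo x \<partial>M) \<le> (\<integral>\<^sup>+x. F x \<partial>M)" .
  obtain n where n: "(\<integral>\<^sup>+x. F x \<partial>M) = ennreal n" "0 \<le> n"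
    using N_up by (cases "\<integral>\<^sup>+x. F x \<partial>M") (auto simp: top_unique)
  have "0 \<le> (\<integral>x. up x \<partial>M)"
    by (intro integral_nonneg_AE) (simp add: up_nonneg)
  with N_up n have "n \<le> (\<integral>x. up x \<partial>M)"
    by (simp add: ennreal_le_iff)
  moreover from N_lo n have "(\<integral>x. lo x \<partial>M) \<le> n"
    by (cases "0 \<le> (\<integral>x. lo x \<partial>M)") (simp_all add: ennreal_le_iff)
  ultimately show thesis
    using n that by blast
qed

lemma nn_integral_approx_set_integral:
  fixes f :: "'a \<Rightarrow> ereal" and g e :: "'a \<Rightarrow> real"
  assumes g: "set_integrable M A g" and e: "set_integrable M A e"
    and f_nonneg: "\<And>x. x \<in> A \<Longrightarrow> 0 \<le> f x"
    and approx: "\<And>x. x \<in> A \<Longrightarrow> \<bar>f x - ereal (g x)\<bar> \<le> ereal (e x)"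
  shows "\<bar>enn2ereal (\<integral>\<^sup>+x. e2ennreal (f x) * indicator A x \<partial>M) - ereal (\<integral>x\<in>A. g x \<partial>M)\<bar>
           \<le> ereal (\<integral>x\<in>A. e x \<partial>M)"
proof -
  define up where "up x = indicator A x * (g x + e x)" for x
  define lo where "lo x = indicator A x * (g x - e x)" for x
  have bounds: "ennreal (lo x) \<le> e2ennreal (f x) * indicator A x
      \<and> e2ennreal (f x) * indicator A x \<le> ennreal (up x) \<and> 0 \<le> up x" for x
  proof (cases "x \<in> A")
    case True
    then obtain y where "f x = ereal y" "0 \<le> y" "g x - e x \<le> y" "y \<le> g x + e x"
      using f_nonneg[OF True] approx[OF True] by (cases "f x") (auto simp: abs_le_iff)
    with True show ?thesis
      by (simp add: up_def lo_def e2ennreal_ereal ennreal_leI)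
  qed (simp add: up_def lo_def)
  have "integrable M lo" "integrable M up"
    using set_integral_add(1)[OF g e] set_integral_diff(1)[OF g e]
    by (simp_all add: set_integrable_def up_def[abs_def] lo_def[abs_def])
  moreover note bounds[THEN conjunct2, THEN conjunct2] bounds[THEN conjunct1]
    bounds[THEN conjunct2, THEN conjunct1]
  ultimately obtain n where "(\<integral>\<^sup>+x. e2ennreal (f x) * indicator A x \<partial>M) = ennreal n"
    "0 \<le> n" "(\<integral>x. lo x \<partial>M) \<le> n" "n \<le> (\<integral>x. up x \<partial>M)"
    by (rule nn_integral_between_integrals)
  moreover have "(\<integral>x. up x \<partial>M) = (\<integral>x\<in>A. g x \<partial>M) + (\<integral>x\<in>A. e x \<partial>M)"
    using set_integral_add(2)[OF g e] by (simp add: set_lebesgue_integral_def up_def[abs_def])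
  moreover have "(\<integral>x. lo x \<partial>M) = (\<integral>x\<in>A. g x \<partial>M) - (\<integral>x\<in>A. e x \<partial>M)"
    using set_integral_diff(2)[OF g e] by (simp add: set_lebesgue_integral_def lo_def[abs_def])
  ultimately show ?thesis
    by (simp add: abs_le_iff)
qed

lemma abs_ereal_scale_diff_le:
  assumes "0 < c" and "\<bar>x - ereal (c * a)\<bar> \<le> ereal (c * b)"
  shows "\<bar>ereal (1 / c) * x - ereal a\<bar> \<le> ereal b"
proof (cases x)
  case (real y)
  then have "\<bar>y - c * a\<bar> \<le> c * b"
    using assms(2) by simp
  then have "\<bar>y / c - a\<bar> \<le> b"
    using assms(1) by (simp add: abs_le_iff field_simps)
  then show ?thesis
    using real by simp
qed (use assms in auto)

lemma set_integrable_bilinear_diag_diff: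
  fixes Bf :: "real^'n^'n \<Rightarrow> real^'n^'n \<Rightarrow> real" and \<Phi> \<Psi> :: "'a \<Rightarrow> real^'n^'n"
  assumes bil: "bilinear Bf" and K: "\<And>u v. \<bar>Bf u v\<bar> \<le> K * norm u * norm v" and K_nonneg: "0 \<le> K"
    and \<Omega>: "\<Omega> \<in> sets M"
    and \<Phi>_meas: "set_borel_measurable M \<Omega> \<Phi>" and \<Psi>_meas: "set_borel_measurable M \<Omega> \<Psi>"
    and \<Phi>_L2: "set_integrable M \<Omega> (\<lambda>x. (norm (\<Phi> x))^2)"
    and \<Psi>_L2: "set_integrable M \<Omega> (\<lambda>x. (norm (\<Psi> x))^2)"
  shows "set_integrable M \<Omega> (\<lambda>x. Bf (\<Phi> x - \<Psi> x) (\<Phi> x - \<Psi> x))"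
proof (rule set_integrable_bound)
  show "set_integrable M \<Omega> (\<lambda>x. 2 * K * ((norm (\<Phi> x))^2 + (norm (\<Psi> x))^2))"
    using set_integral_add(1)[OF \<Phi>_L2 \<Psi>_L2] by simp
  have [measurable]: "\<Phi> \<in> borel_measurable (restrict_space M \<Omega>)" "\<Psi> \<in> borel_measurable (restrict_space M \<Omega>)"
    using \<Phi>_meas \<Psi>_meas \<Omega> by (simp_all add: set_borel_measurable_def borel_measurable_restrict_space_iff)
  have "continuous_on UNIV (\<lambda>G. Bf G G)"
    using bilinear_conv_bounded_bilinear[of Bf] bil
    by (intro bounded_bilinear.continuous_on[of Bf] continuous_intros) auto
  then have "(\<lambda>G. Bf G G) \<in> borel_measurable borel"
    by (rule borel_measurable_continuous_onI)
  then have "(\<lambda>x. Bf (\<Phi> x - \<Psi> x) (\<Phi> x - \<Psi> x)) \<in> borel_measurable (restrict_space M \<Omega>)"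
    using measurable_compose[of "\<lambda>x. \<Phi> x - \<Psi> x" "restrict_space M \<Omega>"] by simp
  with \<Omega> show "set_borel_measurable M \<Omega> (\<lambda>x. Bf (\<Phi> x - \<Psi> x) (\<Phi> x - \<Psi> x))"
    by (simp add: set_borel_measurable_def borel_measurable_restrict_space_iff)
  have "\<bar>Bf (\<Phi> x - \<Psi> x) (\<Phi> x - \<Psi> x)\<bar> \<le> 2 * K * ((norm (\<Phi> x))^2 + (norm (\<Psi> x))^2)" for x
    using K[of "\<Phi> x - \<Psi> x" "\<Phi> x - \<Psi> x"] mult_left_mono[OF norm_diff_sq_le K_nonneg, of "\<Phi> x" "\<Psi> x"]
    by (simp add: power2_eq_square algebra_simps)
  then show "AE x in M. x \<in> \<Omega> \<longrightarrow>
      norm (Bf (\<Phi> x - \<Psi> x) (\<Phi> x - \<Psi> x)) \<le> norm (2 * K * ((norm (\<Phi> x))^2 + (norm (\<Psi> x))^2))"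
    by (auto intro: order_trans[OF _ abs_ge_self])
qed

lemma truncated_energy_estimate:
  fixes W :: "real^'n^'n \<Rightarrow> ereal" and r :: "real \<Rightarrow> ereal"
    and Bf :: "real^'n^'n \<Rightarrow> real^'n^'n \<Rightarrow> real" and \<Phi> \<Psi> :: "'a \<Rightarrow> real^'n^'n"
  assumes W_nonneg: "\<And>F. 0 \<le> W F"
    and r_mono: "mono_on {0..} r"
    and W_Q: "\<And>G. \<bar>W (mat 1 + G) - ereal (Bf G G)\<bar> \<le> ereal ((norm G)^2) * r (norm G)"
    and bil: "bilinear Bf" and K: "\<And>u v. \<bar>Bf u v\<bar> \<le> K * norm u * norm v" and K_nonneg: "0 \<le> K"
    and \<Omega>: "\<Omega> \<in> sets M"
    and \<Phi>_meas: "set_borel_measurable M \<Omega> \<Phi>" and \<Psi>_meas: "set_borel_measurable M \<Omega> \<Psi>"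
    and \<Phi>_L2: "set_integrable M \<Omega> (\<lambda>x. (norm (\<Phi> x))^2)"
    and \<Psi>_L2: "set_integrable M \<Omega> (\<lambda>x. (norm (\<Psi> x))^2)"
    and L2_bound: "(\<integral>x\<in>\<Omega>. (norm (\<Phi> x))^2 + (norm (\<Psi> x))^2 \<partial>M) \<le> C"
    and h: "0 < h" and d: "0 \<le> d" "d \<le> 1/4"
    and \<rho>: "r (3 * sqrt d) \<le> ereal \<rho>" and \<rho>_nonneg: "0 \<le> \<rho>"
  defines "T \<equiv> {x\<in>\<Omega>. h^2 * ((norm (\<Phi> x))^2 + (norm (\<Psi> x))^2) < d}"
  shows "\<bar>ereal (1 / h^2) * enn2ereal (\<integral>\<^sup>+x. e2ennreal (W ((mat 1 + h *\<^sub>R \<Phi> x) **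
              matrix_inv (mat 1 + h *\<^sub>R \<Psi> x))) * indicator T x \<partial>M)
           - ereal (\<integral>x\<in>T. Bf (\<Phi> x - \<Psi> x) (\<Phi> x - \<Psi> x) \<partial>M)\<bar>
         \<le> ereal (12 * (\<rho> + K * sqrt d) * C)"
proof -
  define s where "s x = (norm (\<Phi> x))^2 + (norm (\<Psi> x))^2" for x
  define q where "q x = Bf (\<Phi> x - \<Psi> x) (\<Phi> x - \<Psi> x)" for x
  define E where "E = 12 * (\<rho> + K * sqrt d)"
  have s_int: "set_integrable M \<Omega> s"
    unfolding s_def[abs_def] using \<Phi>_L2 \<Psi>_L2 by (rule set_integral_add(1))
  have T: "T \<in> sets M" "T \<subseteq> \<Omega>"
    using sublevel_set_in_sets[OF set_integrable_mult_right[OF s_int, of "h^2"] \<Omega>, of d]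
    by (auto simp: T_def s_def)
  have approx: "\<bar>W ((mat 1 + h *\<^sub>R \<Phi> x) ** matrix_inv (mat 1 + h *\<^sub>R \<Psi> x)) - ereal (h^2 * q x)\<bar>
      \<le> ereal (h^2 * (E * s x))" if "x \<in> T" for x
  proof -
    have small: "(norm (h *\<^sub>R \<Phi> x))^2 + (norm (h *\<^sub>R \<Psi> x))^2 = h^2 * s x"
      using h by (simp add: s_def power_mult_distrib algebra_simps)
    have quadratic: "Bf (h *\<^sub>R \<Phi> x - h *\<^sub>R \<Psi> x) (h *\<^sub>R \<Phi> x - h *\<^sub>R \<Psi> x) = h^2 * q x"
      by (simp add: q_def bilinear_lmul[OF bil] bilinear_rmul[OF bil] power2_eq_square
          flip: scaleR_diff_right)
    have "h^2 * s x \<le> d"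
      using that by (simp add: T_def s_def)
    from stored_energy_linearisation[OF W_nonneg r_mono W_Q bil K K_nonneg this[folded small] d(2) \<rho> \<rho>_nonneg]
    show ?thesis
      unfolding small quadratic by (simp add: E_def mult_ac)
  qed
  have "set_integrable M T (\<lambda>x. h^2 * q x)" "set_integrable M T (\<lambda>x. h^2 * (E * s x))"
    using set_integrable_bilinear_diag_diff[OF bil K K_nonneg \<Omega> \<Phi>_meas \<Psi>_meas \<Phi>_L2 \<Psi>_L2]
      set_integrable_subset[OF s_int T]
    by (simp_all add: set_integrable_subset[OF _ T] q_def[abs_def])
  from nn_integral_approx_set_integral[OF this W_nonneg approx]
  have "\<bar>enn2ereal (\<integral>\<^sup>+x. e2ennreal (W ((mat 1 + h *\<^sub>R \<Phi> x) ** matrix_inv (mat 1 + h *\<^sub>R \<Psi> x)))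
            * indicator T x \<partial>M) - ereal (h^2 * (\<integral>x\<in>T. q x \<partial>M))\<bar>
        \<le> ereal (h^2 * (E * (\<integral>x\<in>T. s x \<partial>M)))"
    by simp
  also have "\<dots> \<le> ereal (h^2 * (E * C))"
  proof -
    have "(\<integral>x\<in>T. s x \<partial>M) \<le> (\<integral>x\<in>\<Omega>. s x \<partial>M)"
      using set_integrable_subset[OF s_int T] s_int T(2)
      unfolding set_integrable_def set_lebesgue_integral_def
      by (intro integral_mono) (auto simp: s_def indicator_def)
    with L2_bound \<rho>_nonneg K_nonneg d show ?thesis
      by (simp add: E_def s_def mult_left_mono)
  qed
  finally show ?thesis
    using abs_ereal_scale_diff_le[of "h^2"] h by (simp add: q_def E_def)
qed

lemma truncation_set_properties:
  fixes \<Phi> \<Psi> :: "'a \<Rightarrow> real^'n^'n" and h :: real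
  assumes \<Omega>: "\<Omega> \<in> sets M"
    and \<Phi>_L2: "set_integrable M \<Omega> (\<lambda>x. (norm (\<Phi> x))^2)"
    and \<Psi>_L2: "set_integrable M \<Omega> (\<lambda>x. (norm (\<Psi> x))^2)"
    and L2_bound: "(\<integral>x\<in>\<Omega>. (norm (\<Phi> x))^2 + (norm (\<Psi> x))^2 \<partial>M) \<le> C"
    and d: "0 < d" "d \<le> 1"
  defines "T \<equiv> {x\<in>\<Omega>. h^2 * ((norm (\<Phi> x))^2 + (norm (\<Psi> x))^2) < d}"
  shows "T \<in> sets M" and "T \<subseteq> \<Omega>"
    and "\<And>x. x \<in> T \<Longrightarrow> 0 < det (mat 1 + h *\<^sub>R \<Psi> x)"
    and "measure M (\<Omega> - T) \<le> h^2 / d * C"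
proof -
  have int: "set_integrable M \<Omega> (\<lambda>x. h^2 * ((norm (\<Phi> x))^2 + (norm (\<Psi> x))^2))"
    using set_integral_add(1)[OF \<Phi>_L2 \<Psi>_L2] by simp
  show "T \<in> sets M"
    unfolding T_def by (rule sublevel_set_in_sets[OF int \<Omega>])
  show "T \<subseteq> \<Omega>"
    by (auto simp: T_def)
  show "0 < det (mat 1 + h *\<^sub>R \<Psi> x)" if "x \<in> T" for x
  proof (rule det_mat_1_add_pos)
    have "(norm (h *\<^sub>R \<Psi> x))^2 \<le> h^2 * ((norm (\<Phi> x))^2 + (norm (\<Psi> x))^2)"
      by (simp add: power_mult_distrib mult_left_mono)
    also have "\<dots> < 1"
      using that d by (simp add: T_def)
    finally show "norm (h *\<^sub>R \<Psi> x) < 1"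
      by (simp add: power_less_one_iff)
  qed
  have "measure M (\<Omega> - T) \<le> (\<integral>x\<in>\<Omega>. h^2 * ((norm (\<Phi> x))^2 + (norm (\<Psi> x))^2) \<partial>M) / d"
    unfolding T_def by (rule measure_diff_sublevel_le[OF int \<Omega> _ d(1)]) simp
  also have "\<dots> \<le> h^2 / d * C"
    using L2_bound d(1) by (simp add: mult_left_mono divide_right_mono)
  finally show "measure M (\<Omega> - T) \<le> h^2 / d * C" .
qed

text \<open>The truncation threshold must shrink (to control the energy error) but more slowly
  than both \<open>h\<^sup>2\<close> and \<open>\<kappa> h\<close> (to control the measure of the discarded set).\<close>
lemma vanishing_threshold:
  fixes \<kappa> :: "real \<Rightarrow> real"
  assumes \<kappa>_pos: "\<And>h. 0 < h \<Longrightarrow> 0 < \<kappa> h" and \<kappa>_lim: "(\<kappa> \<longlongrightarrow> 0) (at_right 0)"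
  obtains d :: "real \<Rightarrow> real"
  where "\<And>h. 0 < h \<Longrightarrow> 0 < d h" and "\<And>h. d h \<le> 1/4" and "(d \<longlongrightarrow> 0) (at_right 0)"
    and "((\<lambda>h. h^2 / d h) \<longlongrightarrow> 0) (at_right 0)" and "((\<lambda>h. \<kappa> h / d h) \<longlongrightarrow> 0) (at_right 0)"
proof -
  define d where "d h = min (1/4) (sqrt (\<kappa> h) + h)" for h
  have lim: "((\<lambda>h. sqrt (\<kappa> h) + h) \<longlongrightarrow> 0) (at_right 0)"
    using tendsto_add[OF tendsto_real_sqrt[OF \<kappa>_lim] tendsto_ident_at] by simp
  have "\<forall>\<^sub>F h in at_right 0. sqrt (\<kappa> h) + h < 1/4"
    using lim by (rule order_tendstoD) simp
  then have ev: "\<forall>\<^sub>F h in at_right 0. 0 < h \<and> 0 < \<kappa> h \<and> d h = sqrt (\<kappa> h) + h"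
    using eventually_at_right_less by eventually_elim (simp add: d_def \<kappa>_pos)
  show thesis
  proof (rule that)
    show "0 < d h" if "0 < h" for h
      using \<kappa>_pos[OF that] that by (simp add: d_def add_pos_pos)
    show "d h \<le> 1/4" for h
      by (simp add: d_def min_def)
    show "(d \<longlongrightarrow> 0) (at_right 0)"
      using lim by (rule Lim_transform_eventually) (use ev in \<open>auto elim: eventually_mono\<close>)
    show "((\<lambda>h. h^2 / d h) \<longlongrightarrow> 0) (at_right 0)"
    proof (rule Lim_null_comparison[OF _ tendsto_ident_at], use ev in eventually_elim)
      case (elim h)
      then have "h^2 / d h \<le> h^2 / h"
        by (intro divide_left_mono) (simp_all add: add_pos_pos)
      with elim show ?case
        by (simp add: power2_eq_square abs_of_pos add_pos_pos)
    qed
    show "((\<lambda>h. \<kappa> h / d h) \<longlongrightarrow> 0) (at_right 0)"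
    proof (rule Lim_null_comparison[OF _ tendsto_real_sqrt[OF \<kappa>_lim, unfolded real_sqrt_zero]],
        use ev in eventually_elim)
      case (elim h)
      then have "\<kappa> h / d h \<le> \<kappa> h / sqrt (\<kappa> h)"
        by (intro divide_left_mono) (simp_all add: add_pos_pos)
      with elim show ?case
        by (simp add: real_div_sqrt abs_of_pos add_pos_pos)
    qed
  qed
qed

lemma uniform_L2_bound:
  fixes f :: "'i \<Rightarrow> 'a \<Rightarrow> 'b::real_normed_vector"
  assumes meas: "\<And>i. P i \<Longrightarrow> set_borel_measurable M A (f i)"
    and bound: "\<exists>C. \<forall>i. P i \<longrightarrow> (\<integral>\<^sup>+x. ennreal ((norm (f i x))^2) * indicator A x \<partial>M) \<le> ennreal C"
  obtains C where "\<And>i. P i \<Longrightarrow> set_integrable M A (\<lambda>x. (norm (f i x))^2)"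
    and "\<And>i. P i \<Longrightarrow> (\<integral>x\<in>A. (norm (f i x))^2 \<partial>M) \<le> C"
proof -
  obtain C where "\<And>i. P i \<Longrightarrow> (\<integral>\<^sup>+x. ennreal ((norm (f i x))^2) * indicator A x \<partial>M) \<le> ennreal (max 0 C)"
    using bound by (auto simp: ennreal_max_0)
  from set_integrable_norm_sq[OF meas this max.cobounded1] that show thesis
    by blast
qed

lemma tendsto_zero_ereal_imp_real:
  fixes f :: "'a \<Rightarrow> ereal"
  assumes lim: "(f \<longlongrightarrow> 0) F" and nonneg: "\<forall>\<^sub>F x in F. 0 \<le> f x"
  obtains g :: "'a \<Rightarrow> real" where "(g \<longlongrightarrow> 0) F" and "\<forall>\<^sub>F x in F. f x = ereal (g x) \<and> 0 \<le> g x"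
proof
  show "((\<lambda>x. real_of_ereal (f x)) \<longlongrightarrow> 0) F"
    using lim by (simp add: zero_ereal_def)
  have "\<forall>\<^sub>F x in F. f x < 1"
    using lim by (rule order_tendstoD) simp
  with nonneg show "\<forall>\<^sub>F x in F. f x = ereal (real_of_ereal (f x)) \<and> 0 \<le> real_of_ereal (f x)"
    by eventually_elim (auto simp: ereal_real real_of_ereal_pos)
qed

lemma tendsto_abs_ereal_zero:
  fixes f :: "'a \<Rightarrow> ereal"
  assumes "\<forall>\<^sub>F x in F. \<bar>f x\<bar> \<le> ereal (u x)" and "(u \<longlongrightarrow> 0) F"
  shows "((\<lambda>x. \<bar>f x\<bar>) \<longlongrightarrow> 0) F"
proof (rule tendsto_sandwich[of "\<lambda>_. 0" _ _ "\<lambda>x. ereal (u x)"])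
  show "((\<lambda>x. ereal (u x)) \<longlongrightarrow> 0) F"
    using tendsto_ereal[OF assms(2)] by (simp add: zero_ereal_def)
qed (use assms(1) in simp_all)

theorem mainTheorem10:
  fixes W :: "real^3^3 \<Rightarrow> ereal"
    and Q :: "real^3^3 \<Rightarrow> real"
    and r :: "real \<Rightarrow> ereal"
    and \<Omega> :: "(real^3) set"
    and \<Phi> \<Psi> :: "real \<Rightarrow> real^3 \<Rightarrow> real^3^3"
    and \<kappa> :: "real \<Rightarrow> real"
  assumes W_nonneg: "\<And>F. W F \<ge> 0"
    and Q_quad: "quadratic_form Q"
    and r_nonneg: "\<And>\<delta>. \<delta> \<ge> 0 \<Longrightarrow> r \<delta> \<ge> 0"
    and r_mono: "mono_on {0..} r"
    and r_lim: "(r \<longlongrightarrow> 0) (at_right 0)"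
    and W_Q: "\<And>G. \<bar>W (mat 1 + G) - ereal (Q G)\<bar> \<le> ereal ((norm G)^2) * r (norm G)"
    and \<Omega>_meas: "\<Omega> \<in> sets lebesgue"
    and \<Omega>_bdd: "bounded \<Omega>"
    and \<Phi>_meas: "\<And>h. h > 0 \<Longrightarrow> (\<lambda>x. indicator \<Omega> x *\<^sub>R \<Phi> h x) \<in> borel_measurable lebesgue"
    and \<Psi>_meas: "\<And>h. h > 0 \<Longrightarrow> (\<lambda>x. indicator \<Omega> x *\<^sub>R \<Psi> h x) \<in> borel_measurable lebesgue"
    and \<Phi>_bdd: "\<exists>C. \<forall>h>0. (\<integral>\<^sup>+ x. ennreal ((norm (\<Phi> h x))^2) * indicator \<Omega> x \<partial>lebesgue) \<le> ennreal C"
    and \<Psi>_bdd: "\<exists>C. \<forall>h>0. (\<integral>\<^sup>+ x. ennreal ((norm (\<Psi> h x))^2) * indicator \<Omega> x \<partial>lebesgue) \<le> ennreal C"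
    and \<kappa>_pos: "\<And>h. h > 0 \<Longrightarrow> \<kappa> h > 0"
    and \<kappa>_lim: "(\<kappa> \<longlongrightarrow> 0) (at_right 0)"
  shows "\<exists>Oh :: real \<Rightarrow> (real^3) set.
           (\<forall>h>0. Oh h \<in> sets lebesgue \<and> Oh h \<subseteq> \<Omega> \<and>
                   (\<forall>x\<in>Oh h. det (mat 1 + h *\<^sub>R \<Psi> h x) > 0))
         \<and> ((\<lambda>h. measure lebesgue (\<Omega> - Oh h)) \<longlongrightarrow> 0) (at_right 0)
         \<and> ((\<lambda>h. \<kappa> h / h^2 * measure lebesgue (\<Omega> - Oh h)) \<longlongrightarrow> 0) (at_right 0)
         \<and> ((\<lambda>h. \<bar>ereal (1 / h^2) *
                   enn2ereal (\<integral>\<^sup>+ x. e2ennreal (W ((mat 1 + h *\<^sub>R \<Phi> h x) **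
                                   matrix_inv (mat 1 + h *\<^sub>R \<Psi> h x))) * indicator (Oh h) x \<partial>lebesgue)
                 - ereal (\<integral>x\<in>Oh h. Q (\<Phi> h x - \<Psi> h x) \<partial>lebesgue)\<bar>) \<longlongrightarrow> 0) (at_right 0)"
proof -
  obtain Bf where bil: "bilinear Bf" and Q_Bf: "Q = (\<lambda>G. Bf G G)"
    using Q_quad unfolding quadratic_form_def by fast
  obtain K where K_pos: "0 < K" and K: "\<And>u v. \<bar>Bf u v\<bar> \<le> K * norm u * norm v"
    using bilinear_bounded_pos[OF bil] by auto
  note \<Phi>_meas' = \<Phi>_meas[folded set_borel_measurable_def]
    and \<Psi>_meas' = \<Psi>_meas[folded set_borel_measurable_def]
  obtain C\<Phi> where \<Phi>_L2: "\<And>h. 0 < h \<Longrightarrow> set_integrable lebesgue \<Omega> (\<lambda>x. (norm (\<Phi> h x))^2)"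
    and C\<Phi>: "\<And>h. 0 < h \<Longrightarrow> (\<integral>x\<in>\<Omega>. (norm (\<Phi> h x))^2 \<partial>lebesgue) \<le> C\<Phi>"
    using uniform_L2_bound[OF \<Phi>_meas' \<Phi>_bdd] by blast
  obtain C\<Psi> where \<Psi>_L2: "\<And>h. 0 < h \<Longrightarrow> set_integrable lebesgue \<Omega> (\<lambda>x. (norm (\<Psi> h x))^2)"
    and C\<Psi>: "\<And>h. 0 < h \<Longrightarrow> (\<integral>x\<in>\<Omega>. (norm (\<Psi> h x))^2 \<partial>lebesgue) \<le> C\<Psi>"
    using uniform_L2_bound[OF \<Psi>_meas' \<Psi>_bdd] by blast
  define C where "C = C\<Phi> + C\<Psi>"
  have L2_bound: "(\<integral>x\<in>\<Omega>. (norm (\<Phi> h x))^2 + (norm (\<Psi> h x))^2 \<partial>lebesgue) \<le> C" if "0 < h" for h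
    using C\<Phi>[OF that] C\<Psi>[OF that] set_integral_add(2)[OF \<Phi>_L2[OF that] \<Psi>_L2[OF that]]
    by (simp add: C_def)
  obtain d where d_pos: "\<And>h. 0 < h \<Longrightarrow> 0 < d h" and d_le: "\<And>h. d h \<le> 1/4"
    and d_lim: "(d \<longlongrightarrow> 0) (at_right 0)" and h_d: "((\<lambda>h. h^2 / d h) \<longlongrightarrow> 0) (at_right 0)"
    and \<kappa>_d: "((\<lambda>h. \<kappa> h / d h) \<longlongrightarrow> 0) (at_right 0)"
    using vanishing_threshold[OF \<kappa>_pos \<kappa>_lim] by blast
  define T where "T h = {x\<in>\<Omega>. h^2 * ((norm (\<Phi> h x))^2 + (norm (\<Psi> h x))^2) < d h}" for h
  have T: "T h \<in> sets lebesgue" "T h \<subseteq> \<Omega>" "\<And>x. x \<in> T h \<Longrightarrow> 0 < det (mat 1 + h *\<^sub>R \<Psi> h x)"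
    "measure lebesgue (\<Omega> - T h) \<le> h^2 / d h * C" if h: "0 < h" for h
  proof -
    have "d h \<le> 1"
      using d_le[of h] by simp
    note props = truncation_set_properties[OF \<Omega>_meas \<Phi>_L2[OF h] \<Psi>_L2[OF h] L2_bound[OF h] d_pos[OF h]
        this, where h = h, folded T_def]
    show "T h \<in> sets lebesgue" "T h \<subseteq> \<Omega>" "\<And>x. x \<in> T h \<Longrightarrow> 0 < det (mat 1 + h *\<^sub>R \<Psi> h x)"
      "measure lebesgue (\<Omega> - T h) \<le> h^2 / d h * C"
      by (fact props)+
  qed
  have "filterlim (\<lambda>h. 3 * sqrt (d h)) (at_right 0) (at_right 0)"
    using tendsto_mult_right_zero[OF tendsto_real_sqrt[OF d_lim, unfolded real_sqrt_zero], of 3]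
    by (intro tendsto_imp_filterlim_at_right)
      (auto intro: eventually_mono[OF eventually_at_right_less] d_pos)
  moreover have "\<forall>\<^sub>F h in at_right 0. 0 \<le> r (3 * sqrt (d h))"
    by (intro eventually_mono[OF eventually_at_right_less] r_nonneg) (simp add: d_pos less_imp_le)
  ultimately obtain \<rho> where \<rho>_lim: "(\<rho> \<longlongrightarrow> 0) (at_right 0)"
    and \<rho>: "\<forall>\<^sub>F h in at_right 0. r (3 * sqrt (d h)) = ereal (\<rho> h) \<and> 0 \<le> \<rho> h"
    using tendsto_zero_ereal_imp_real[OF filterlim_compose[OF r_lim]] by blast
  have W_Bf: "\<And>G. \<bar>W (mat 1 + G) - ereal (Bf G G)\<bar> \<le> ereal ((norm G)^2) * r (norm G)"
    using W_Q by (simp add: Q_Bf)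
  have "((\<lambda>h. measure lebesgue (\<Omega> - T h)) \<longlongrightarrow> 0) (at_right 0)"
    by (rule Lim_null_comparison[OF _ tendsto_mult_left_zero[OF h_d, of C]])
      (use eventually_at_right_less[of "0::real"] in \<open>auto elim!: eventually_mono dest: T(4)\<close>)
  moreover have "((\<lambda>h. \<kappa> h / h^2 * measure lebesgue (\<Omega> - T h)) \<longlongrightarrow> 0) (at_right 0)"
  proof (rule Lim_null_comparison[OF _ tendsto_mult_left_zero[OF \<kappa>_d, of C]],
      use eventually_at_right_less in eventually_elim)
    case (elim h)
    have "\<kappa> h / h^2 * measure lebesgue (\<Omega> - T h) \<le> \<kappa> h / h^2 * (h^2 / d h * C)"
      using T(4)[OF elim] \<kappa>_pos[OF elim] by (intro mult_left_mono) simp_all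
    with elim \<kappa>_pos[OF elim] show ?case
      by simp
  qed
  moreover have "((\<lambda>h. \<bar>ereal (1 / h^2) *
                   enn2ereal (\<integral>\<^sup>+ x. e2ennreal (W ((mat 1 + h *\<^sub>R \<Phi> h x) **
                                   matrix_inv (mat 1 + h *\<^sub>R \<Psi> h x))) * indicator (T h) x \<partial>lebesgue)
                 - ereal (\<integral>x\<in>T h. Q (\<Phi> h x - \<Psi> h x) \<partial>lebesgue)\<bar>) \<longlongrightarrow> 0) (at_right 0)"
    unfolding Q_Bf
  proof (rule tendsto_abs_ereal_zero[where u = "\<lambda>h. 12 * (\<rho> h + K * sqrt (d h)) * C"],
      use eventually_at_right_less \<rho> in eventually_elim)
    case (elim h)
    then show ?case
      using truncated_energy_estimate[OF W_nonneg r_mono W_Bf bil K less_imp_le[OF K_pos] \<Omega>_meas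
          \<Phi>_meas'[OF elim(1)] \<Psi>_meas'[OF elim(1)] \<Phi>_L2[OF elim(1)] \<Psi>_L2[OF elim(1)]
          L2_bound[OF elim(1)] elim(1) less_imp_le[OF d_pos[OF elim(1)]] d_le]
      by (simp add: T_def)
  next
    show "((\<lambda>h. 12 * (\<rho> h + K * sqrt (d h)) * C) \<longlongrightarrow> 0) (at_right 0)"
      using \<rho>_lim d_lim by (auto intro!: tendsto_eq_intros)
  qed
  ultimately show ?thesis
    using T by (intro exI[of _ T] conjI) auto
qed

end
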